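(* A finite group $G$ is $2'$-simple if and only if for every nontrivial complex representation $\rho:G\to\mathrm{GL}_d(\mathbb{C})$ there exists $a\in G$ such that $-1$ is an eigenvalue of $\rho(a)$.
   Context: A finite group $G$ is called $2'$-simple if it has no proper normal subgroup of odd index, equivalently $G$ has no nontrivial quotient of odd order, equivalently $G$ is generated by its Sylow $2$-subgroups. *)

theory Defs
  imports "HOL-Algebra.Coset" "Jordan_Normal_Form.Char_Poly"
begin

definition two'_simple :: "('a, 'b) monoid_scheme \<Rightarrow> bool" where
  "two'_simple G \<longleftrightarrow>
     (\<forall>H. normal H G \<and> odd (card (rcosets\<^bsub>G\<^esub> H)) \<longrightarrow> H = carrier G)"

definition complex_rep :: "('a, 'b) monoid_scheme \<Rightarrow> nat \<Rightarrow> ('a \<Rightarrow> complex mat) \<Rightarrow> bool" where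
  "complex_rep G d \<rho> \<longleftrightarrow>
     (\<forall>g \<in> carrier G. \<rho> g \<in> carrier_mat d d \<and> invertible_mat (\<rho> g)) \<and>
     (\<forall>g \<in> carrier G. \<forall>h \<in> carrier G. \<rho> (g \<otimes>\<^bsub>G\<^esub> h) = \<rho> g * \<rho> h)"

definition nontrivial_rep :: "('a, 'b) monoid_scheme \<Rightarrow> nat \<Rightarrow> ('a \<Rightarrow> complex mat) \<Rightarrow> bool" where
  "nontrivial_rep G d \<rho> \<longleftrightarrow> (\<exists>g \<in> carrier G. \<rho> g \<noteq> 1\<^sub>m d)"

end

theory Submission
  imports Defs "HOL-Algebra.Sylow" "HOL-Algebra.Multiplicative_Group"
begin

text \<open>
  If no \<open>\<rho> a\<close> has eigenvalue \<open>-1\<close>, then \<open>\<rho>\<close> kills every element of \<open>2\<close>-power order: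
  by induction on the exponent, \<open>\<rho> g\<close> is an involution, and an involution other than the
  identity has eigenvalue \<open>-1\<close>. So the kernel of \<open>\<rho>\<close> contains a Sylow \<open>2\<close>-subgroup, has odd
  index, and \<open>2'\<close>-simplicity forces \<open>\<rho>\<close> to be trivial. Conversely, if \<open>H\<close> is a proper normal
  subgroup of odd index \<open>n\<close>, the regular representation of \<open>G/H\<close>, pulled back to \<open>G\<close>, is
  nontrivial and satisfies \<open>\<rho> a ^ n = 1\<close>; since \<open>n\<close> is odd, \<open>-1\<close> is never an eigenvalue.
\<close>

lemma eigenvalue_neg_one_if_involution:
  fixes A :: "'a :: comm_ring_1 mat"
  assumes A: "A \<in> carrier_mat n n" and AA: "A * A = 1\<^sub>m n" and ne: "A \<noteq> 1\<^sub>m n"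
  shows "eigenvalue A (-1)"
proof -
  obtain i j where ij: "i < n" "j < n" "A $$ (i,j) \<noteq> 1\<^sub>m n $$ (i,j)"
    using ne A by (metis carrier_matD eq_matI index_one_mat(2,3))
  define v :: "'a vec" where "v = unit_vec n j"
  \<comment> \<open>\<open>A\<close> negates \<open>A v - v\<close>, which is nonzero because column \<open>j\<close> of \<open>A\<close> differs from \<open>v\<close>.\<close>
  define w where "w = A *\<^sub>v v - v"
  have v: "v \<in> carrier_vec n" unfolding v_def by simp
  have Av: "A *\<^sub>v v \<in> carrier_vec n" using A v by simp
  have w: "w \<in> carrier_vec n" unfolding w_def using Av v by simp
  have "w $ i = A $$ (i,j) - 1\<^sub>m n $$ (i,j)"
    unfolding w_def v_def using ij A by (simp add: mult_mat_vec_def)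
  with ij have w0: "w \<noteq> 0\<^sub>v n" by auto
  have "A *\<^sub>v w = A *\<^sub>v (A *\<^sub>v v) - A *\<^sub>v v"
    unfolding w_def using A v Av by (simp add: mult_minus_distrib_mat_vec)
  also have "A *\<^sub>v (A *\<^sub>v v) = v"
    using A v AA by (metis assoc_mult_mat_vec one_mult_mat_vec)
  finally have "A *\<^sub>v w = (-1) \<cdot>\<^sub>v w"
    unfolding w_def using v Av A by (intro eq_vecI) auto
  then show ?thesis unfolding eigenvalue_def eigenvector_def using w w0 A by auto
qed

lemma not_eigenvalue_neg_one_if_odd_pow_eq_one:
  fixes A :: "'a :: {idom, ring_char_0} mat"
  assumes A: "A \<in> carrier_mat n n" and pow: "A ^\<^sub>m k = 1\<^sub>m n" and "odd k"
  shows "\<not> eigenvalue A (-1)"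
proof
  assume "eigenvalue A (-1)"
  then obtain v where ev: "eigenvector A v (-1)" unfolding eigenvalue_def by blast
  then have v: "v \<in> carrier_vec n" "v \<noteq> 0\<^sub>v n" using A unfolding eigenvector_def by auto
  have "v = (-1) \<cdot>\<^sub>v v"
    using eigenvector_pow[OF A ev, of k] pow v \<open>odd k\<close> by simp
  then have "v = 0\<^sub>v n"
  proof (intro eq_vecI)
    fix i assume eq: "v = (-1) \<cdot>\<^sub>v v" and i: "i < dim_vec (0\<^sub>v n)"
    have "v $ i = - (v $ i)" using arg_cong[OF eq, of "\<lambda>w. w $ i"] i v by simp
    then show "v $ i = 0\<^sub>v n $ i" using i by simp
  qed (use v in simp)
  with v show False by simp
qed

lemma complex_rep_comp_hom:
  assumes "h \<in> hom G K" and "complex_rep K d \<rho>"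
  shows "complex_rep G d (\<rho> \<circ> h)"
  using assms unfolding complex_rep_def by (auto simp: hom_mult hom_in_carrier)

locale group_rep = group G for G :: "('a, 'b) monoid_scheme" (structure) +
  fixes d :: nat and \<rho> :: "'a \<Rightarrow> complex mat"
  assumes rep: "complex_rep G d \<rho>"
begin

lemma rep_carrier: "g \<in> carrier G \<Longrightarrow> \<rho> g \<in> carrier_mat d d"
  using rep unfolding complex_rep_def by auto

lemma rep_mult: "g \<in> carrier G \<Longrightarrow> h \<in> carrier G \<Longrightarrow> \<rho> (g \<otimes> h) = \<rho> g * \<rho> h"
  using rep unfolding complex_rep_def by auto

lemma rep_one: "\<rho> \<one> = 1\<^sub>m d"
proof -
  have c: "\<rho> \<one> \<in> carrier_mat d d" "invertible_mat (\<rho> \<one>)"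
    using rep unfolding complex_rep_def by auto
  have sq: "\<rho> \<one> * \<rho> \<one> = \<rho> \<one>" using rep_mult[of \<one> \<one>] by simp
  obtain B where B: "\<rho> \<one> * B = 1\<^sub>m d" "B * \<rho> \<one> = 1\<^sub>m (dim_row B)"
    using c unfolding invertible_mat_def inverts_mat_def by auto
  have Bc: "B \<in> carrier_mat d d"
    using B c by (metis carrier_matD(2) carrier_matI index_mult_mat(3) index_one_mat(3))
  have "\<rho> \<one> = (B * \<rho> \<one>) * \<rho> \<one>" using B Bc c by simp
  also have "\<dots> = B * (\<rho> \<one> * \<rho> \<one>)" using Bc c by simp
  also have "\<dots> = 1\<^sub>m d" using sq B Bc by simp
  finally show ?thesis .
qed

lemma rep_mult_inv: "g \<in> carrier G \<Longrightarrow> \<rho> g * \<rho> (inv g) = 1\<^sub>m d"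
  using rep_mult[of g "inv g"] rep_one by simp

lemma rep_pow: "g \<in> carrier G \<Longrightarrow> \<rho> (g [^] k) = \<rho> g ^\<^sub>m k"
  by (induction k) (simp_all add: rep_one rep_mult carrier_matD[OF rep_carrier])

definition rep_kernel :: "'a set" where
  "rep_kernel = {g \<in> carrier G. \<rho> g = 1\<^sub>m d}"

lemma rep_kernel_normal: "rep_kernel \<lhd> G"
proof (rule normal_inv_iff[THEN iffD2], intro conjI ballI)
  show "subgroup rep_kernel G"
  proof
    fix x assume x: "x \<in> rep_kernel"
    then have "\<rho> (inv x) = \<rho> x * \<rho> (inv x)"
      using rep_carrier[of "inv x"] unfolding rep_kernel_def by simp
    also have "\<dots> = 1\<^sub>m d" using x rep_mult_inv[of x] unfolding rep_kernel_def by blast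
    finally show "inv x \<in> rep_kernel" using x unfolding rep_kernel_def by simp
  qed (auto simp: rep_kernel_def rep_one rep_mult)
next
  fix x h assume x: "x \<in> carrier G" and h: "h \<in> rep_kernel"
  then have "\<rho> (x \<otimes> h \<otimes> inv x) = \<rho> x * \<rho> (inv x)"
    using rep_carrier[OF x] unfolding rep_kernel_def by (simp add: rep_mult)
  with x h show "x \<otimes> h \<otimes> inv x \<in> rep_kernel"
    using rep_mult_inv unfolding rep_kernel_def by simp
qed

lemma rep_kernel_eq_carrier_iff: "rep_kernel = carrier G \<longleftrightarrow> \<not> nontrivial_rep G d \<rho>"
  unfolding rep_kernel_def nontrivial_rep_def by auto

lemma two_power_elements_in_rep_kernel:
  assumes no_ev: "\<forall>a \<in> carrier G. \<not> eigenvalue (\<rho> a) (-1)"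
  shows "g \<in> carrier G \<Longrightarrow> g [^] ((2::nat) ^ k) = \<one> \<Longrightarrow> g \<in> rep_kernel"
proof (induction k arbitrary: g)
  case 0
  then show ?case by (simp add: rep_kernel_def rep_one)
next
  case (Suc k)
  have "g \<otimes> g = g [^] (2::nat)" using Suc.prems(1) by (simp add: numeral_2_eq_2)
  then have "(g \<otimes> g) [^] ((2::nat) ^ k) = g [^] ((2::nat) ^ Suc k)"
    using Suc.prems(1) by (simp add: nat_pow_pow)
  with Suc have "g \<otimes> g \<in> rep_kernel" by simp
  then have "\<rho> g * \<rho> g = 1\<^sub>m d"
    using Suc.prems(1) by (simp add: rep_kernel_def rep_mult)
  with Suc.prems(1) no_ev show ?case
    using eigenvalue_neg_one_if_involution[OF rep_carrier] unfolding rep_kernel_def by blast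
qed

lemma not_eigenvalue_neg_one_if_odd_order:
  assumes "finite (carrier G)" and "odd (Coset.order G)" and "g \<in> carrier G"
  shows "\<not> eigenvalue (\<rho> g) (-1)"
proof (rule not_eigenvalue_neg_one_if_odd_pow_eq_one[OF rep_carrier])
  show "\<rho> g ^\<^sub>m Coset.order G = 1\<^sub>m d"
    using pow_order_eq_1 rep_pow[symmetric] rep_one \<open>g \<in> carrier G\<close> by simp
qed fact+

end

lemma (in group) prime_not_dvd_index_if_p_elements_in:
  fixes p :: nat
  assumes fin: "finite (carrier G)" and p: "prime p" and N: "subgroup N G"
    and p_elements: "\<And>g k. g \<in> carrier G \<Longrightarrow> g [^] (p ^ k) = \<one> \<Longrightarrow> g \<in> N"
  shows "\<not> p dvd card (rcosets N)"
proof -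
  define a where "a = multiplicity p (Coset.order G)"
  obtain m where om: "Coset.order G = p ^ a * m" and m: "\<not> p dvd m"
  proof -
    have "Coset.order G \<noteq> 0" using order_gt_0_iff_finite[THEN iffD2, OF fin] by linarith
    moreover have "\<not> is_unit p" using p not_prime_unit by blast
    ultimately show thesis using that unfolding a_def by (rule multiplicity_decompose')
  qed
  obtain P where P: "subgroup P G" "card P = p ^ a"
    using sylow_thm[OF p is_group om fin] by blast
  have "P \<subseteq> N"
  proof
    fix g assume g: "g \<in> P"
    interpret P: group "G\<lparr>carrier := P\<rparr>"
      using subgroup.subgroup_is_group[OF P(1) is_group] .
    have "g [^] (p ^ a) = \<one>"
      using P.pow_order_eq_1[of g] g P(2) by (simp add: Coset.order_def nat_pow_consistent[symmetric])
    then show "g \<in> N" using p_elements g subgroup.subset[OF P(1)] by blast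
  qed
  interpret N: group "G\<lparr>carrier := N\<rparr>"
    using subgroup.subgroup_is_group[OF N is_group] .
  have "card (rcosets\<^bsub>G\<lparr>carrier := N\<rparr>\<^esub> P) * card P = card N"
    using N.lagrange subgroup_incl[OF P(1) N \<open>P \<subseteq> N\<close>] by (simp add: Coset.order_def)
  then have "card P dvd card N" by (metis dvd_triv_right)
  then obtain t where t: "card N = p ^ a * t" unfolding P(2) by (rule dvdE)
  have "p ^ a * (card (rcosets N) * t) = p ^ a * m"
    using lagrange[OF N] om t by (simp add: ac_simps)
  then have "card (rcosets N) * t = m" using prime_gt_0_nat[OF p] by simp
  with m show ?thesis using dvd_mult2 by blast
qed

lemma (in group_rep) eigenvalue_neg_one_if_two'_simple:
  assumes fin: "finite (carrier G)" and "two'_simple G" and "nontrivial_rep G d \<rho>"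
  shows "\<exists>a \<in> carrier G. eigenvalue (\<rho> a) (-1)"
proof (rule ccontr)
  assume "\<not> ?thesis"
  then have "odd (card (rcosets rep_kernel))"
    using prime_not_dvd_index_if_p_elements_in[OF fin two_is_prime_nat]
      normal.axioms(1)[OF rep_kernel_normal] two_power_elements_in_rep_kernel by blast
  then have "rep_kernel = carrier G"
    using \<open>two'_simple G\<close> rep_kernel_normal unfolding two'_simple_def by blast
  with \<open>nontrivial_rep G d \<rho>\<close> show False using rep_kernel_eq_carrier_iff by blast
qed

text \<open>\<open>c\<close> is meant to enumerate \<open>carrier K\<close> by \<open>{0..<order K}\<close>; then \<open>regular_rep K c x\<close> is the
  permutation matrix of left multiplication by \<open>x\<close>.\<close>

definition regular_rep :: "('a, 'b) monoid_scheme \<Rightarrow> (nat \<Rightarrow> 'a) \<Rightarrow> 'a \<Rightarrow> complex mat" where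
  "regular_rep K c x = mat (Coset.order K) (Coset.order K)
     (\<lambda>(i, j). if c i = x \<otimes>\<^bsub>K\<^esub> c j then 1 else 0)"

context group
begin

context
  fixes c :: "nat \<Rightarrow> 'a"
  assumes c: "bij_betw c {0..<Coset.order G} (carrier G)"
begin

lemma enumeration_closed: "j < Coset.order G \<Longrightarrow> c j \<in> carrier G"
  using c by (auto simp: bij_betw_def)

lemma enumeration_eq_iff: "i < Coset.order G \<Longrightarrow> j < Coset.order G \<Longrightarrow> c i = c j \<longleftrightarrow> i = j"
  using c by (auto simp: bij_betw_def inj_on_def)

lemma regular_rep_mult:
  assumes x: "x \<in> carrier G" and y: "y \<in> carrier G"
  shows "regular_rep G c (x \<otimes> y) = regular_rep G c x * regular_rep G c y"
proof (rule eq_matI)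
  let ?n = "Coset.order G"
  fix i k assume "i < dim_row (regular_rep G c x * regular_rep G c y)"
    and "k < dim_col (regular_rep G c x * regular_rep G c y)"
  then have i: "i < ?n" and k: "k < ?n" by (simp_all add: regular_rep_def)
  have "y \<otimes> c k \<in> c ` {0..<?n}"
    using c k y enumeration_closed by (auto simp: bij_betw_def)
  then obtain j0 where j0: "j0 < ?n" "c j0 = y \<otimes> c k" by auto
  have col: "regular_rep G c y $$ (j, k) = (if j = j0 then 1 else 0)" if "j < ?n" for j
    using that k j0 enumeration_eq_iff[of j j0] by (simp add: regular_rep_def)
  have "(regular_rep G c x * regular_rep G c y) $$ (i, k)
      = (\<Sum>j = 0..<?n. regular_rep G c x $$ (i, j) * regular_rep G c y $$ (j, k))"
    using i k by (simp add: regular_rep_def scalar_prod_def)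
  also have "\<dots> = (\<Sum>j = 0..<?n. if j = j0 then regular_rep G c x $$ (i, j) else 0)"
    by (intro sum.cong) (auto simp: col)
  also have "\<dots> = regular_rep G c x $$ (i, j0)"
    using j0 by simp
  also have "\<dots> = regular_rep G c (x \<otimes> y) $$ (i, k)"
    using i k x y j0 enumeration_closed by (simp add: regular_rep_def m_assoc)
  finally show "regular_rep G c (x \<otimes> y) $$ (i, k) = (regular_rep G c x * regular_rep G c y) $$ (i, k)"
    by simp
qed (simp_all add: regular_rep_def)

lemma regular_rep_one: "regular_rep G c \<one> = 1\<^sub>m (Coset.order G)"
  by (intro eq_matI) (auto simp: regular_rep_def enumeration_closed enumeration_eq_iff)

lemma complex_rep_regular_rep: "complex_rep G (Coset.order G) (regular_rep G c)"
  unfolding complex_rep_def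
proof (intro conjI ballI)
  fix x assume x: "x \<in> carrier G"
  show rc: "regular_rep G c x \<in> carrier_mat (Coset.order G) (Coset.order G)"
    by (simp add: regular_rep_def)
  have "regular_rep G c x * regular_rep G c (inv x) = 1\<^sub>m (Coset.order G)"
    and "regular_rep G c (inv x) * regular_rep G c x = 1\<^sub>m (Coset.order G)"
    using x regular_rep_mult[of x "inv x"] regular_rep_mult[of "inv x" x] regular_rep_one by auto
  then show "invertible_mat (regular_rep G c x)"
    using rc unfolding invertible_mat_def inverts_mat_def by (auto simp: regular_rep_def)
qed (rule regular_rep_mult)

lemma regular_rep_faithful:
  assumes "x \<in> carrier G" and "regular_rep G c x = 1\<^sub>m (Coset.order G)"
  shows "x = \<one>"
proof -
  have "\<one> \<in> c ` {0..<Coset.order G}"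
    using c by (simp add: bij_betw_def)
  then obtain i where i: "i < Coset.order G" "c i = \<one>" by auto
  have "regular_rep G c x $$ (i, i) = 1"
    using assms(2) i by simp
  with i assms(1) show ?thesis by (simp add: regular_rep_def split: if_splits)
qed

end

end

lemma (in normal) nontrivial_rep_without_eigenvalue_neg_one_if_odd_index:
  assumes fin: "finite (carrier G)" and "odd (card (rcosets H))" and "H \<noteq> carrier G"
  shows "\<exists>d \<rho>. complex_rep G d \<rho> \<and> nontrivial_rep G d \<rho> \<and>
    (\<forall>a \<in> carrier G. \<not> eigenvalue (\<rho> a) (-1))"
proof -
  interpret K: group "G Mod H" by (rule factorgroup_is_group)
  have K_order: "Coset.order (G Mod H) = card (rcosets H)"
    by (simp add: Coset.order_def FactGroup_def)
  have K_fin: "finite (carrier (G Mod H))"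
    using fin by (simp add: carrier_FactGroup)
  obtain c where c: "bij_betw c {0..<Coset.order (G Mod H)} (carrier (G Mod H))"
    using ex_bij_betw_nat_finite[OF K_fin] unfolding Coset.order_def by blast
  interpret K_rep: group_rep "G Mod H" "Coset.order (G Mod H)" "regular_rep (G Mod H) c"
    by unfold_locales (rule K.complex_rep_regular_rep[OF c])
  define \<rho> where "\<rho> = regular_rep (G Mod H) c \<circ> (\<lambda>a. H #> a)"
  have "complex_rep G (Coset.order (G Mod H)) \<rho>"
    unfolding \<rho>_def using r_coset_hom_Mod K_rep.rep by (rule complex_rep_comp_hom)
  moreover have "nontrivial_rep G (Coset.order (G Mod H)) \<rho>"
  proof -
    obtain g where g: "g \<in> carrier G" "g \<notin> H"
      using \<open>H \<noteq> carrier G\<close> subset by blast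
    then have "H #> g \<noteq> \<one>\<^bsub>G Mod H\<^esub>"
      using rcos_self[OF g(1) is_subgroup] by auto
    then have "\<rho> g \<noteq> 1\<^sub>m (Coset.order (G Mod H))"
      using K.regular_rep_faithful[OF c] hom_in_carrier[OF r_coset_hom_Mod g(1)]
      unfolding \<rho>_def by auto
    with g(1) show ?thesis unfolding nontrivial_rep_def by blast
  qed
  moreover have "\<not> eigenvalue (\<rho> a) (-1)" if "a \<in> carrier G" for a
    unfolding \<rho>_def using K_rep.not_eigenvalue_neg_one_if_odd_order[OF K_fin]
      \<open>odd (card (rcosets H))\<close> K_order hom_in_carrier[OF r_coset_hom_Mod that] by simp
  ultimately show ?thesis by blast
qed

theorem mainTheorem14:
  fixes G :: "('a, 'b) monoid_scheme"
  assumes "group G" and "finite (carrier G)"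
  shows "two'_simple G \<longleftrightarrow>
    (\<forall>(d::nat) (\<rho>::'a \<Rightarrow> complex mat). complex_rep G d \<rho> \<and> nontrivial_rep G d \<rho> \<longrightarrow>
        (\<exists>a \<in> carrier G. eigenvalue (\<rho> a) (-1)))"
proof
  assume "two'_simple G"
  with assms show "\<forall>d \<rho>. complex_rep G d \<rho> \<and> nontrivial_rep G d \<rho> \<longrightarrow>
      (\<exists>a \<in> carrier G. eigenvalue (\<rho> a) (-1))"
    by (blast intro: group_rep.eigenvalue_neg_one_if_two'_simple group_rep.intro group_rep_axioms.intro)
next
  assume "\<forall>d \<rho>. complex_rep G d \<rho> \<and> nontrivial_rep G d \<rho> \<longrightarrow>
      (\<exists>a \<in> carrier G. eigenvalue (\<rho> a) (-1))"
  with assms(2) show "two'_simple G"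
    unfolding two'_simple_def
    using normal.nontrivial_rep_without_eigenvalue_neg_one_if_odd_index by blast
qed

end
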